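(* Let $h\in\mathcal H$ and $\varphi(\underline{x})=h(x_0,x_1)$ on $X=[0,1]^{\mathbb N_0}$. Let $a,b\in\mathrm{m}_h$ belong to the same connected component $C(a)$ of $\mathrm{m}_h$, and suppose that \[\lim_{\delta\to0^+}\left(\frac{h(z+\delta,z)-h(z,z)}{\delta}+\frac{h(z,z+\delta)-h(z,z)}{\delta}\right)=0\quad\text{for every }z\in C(a).\] Then $H_\varphi(a^\infty,b^\infty)+H_\varphi(b^\infty,a^\infty)=0$, i.e. $a^\infty\sim_\varphi b^\infty$.
   Context: $X=[0,1]^{\mathbb N_0}$ with metric $d_X(\underline{x},\underline{y})=\sum_{i\ge0}|x_i-y_i|/2^{i+1}$ and shift $\sigma(\underline{x})_i=x_{i+1}$. $\alpha_\varphi=\inf_\mu\int\varphi\,d\mu$ over $\sigma$-invariant Borel probability measures. $B(\underline{x},\underline{y},n;\varepsilon)=\{\underline{z}: d_X(\underline{x},\underline{z})<\varepsilon,\ d_X(\sigma^n\underline{z},\underline{y})<\varepsilon\}$; Peierls barrier $H_\varphi(\underline{x},\underline{y})=\lim_{\varepsilon\to0}\liminf_{n\to\infty}\inf\{\sum_{i=0}^{n-1}(\varphi(\sigma^i\underline{z})-\alpha_\varphi): \underline{z}\in B(\underline{x},\underline{y},n;\varepsilon)\}\in\mathbb R\cup\{+\infty\}$. $h^*=\min_x h(x,x)$, $\mathrm{m}_h=\{a: h(a,a)=h^*\}$, $a^\infty=aaa\ldots$. A finite sequence $(x_k,\dots,x_l)$ is minimal (for $h$) if $\sum_{i=k}^{l-1}h(x_i,x_{i+1})\le\sum_{i=k}^{l-1}h(y_i,y_{i+1})$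 for every $(y_k,\dots,y_l)$ in $[0,1]$ with the same endpoints. $\mathcal H$ is the set of Lipschitz $h:[0,1]^2\to\mathbb R$ such that (H3) if $\xi_1<\xi_2$, $\eta_1<\eta_2$ then $h(\xi_1,\eta_1)+h(\xi_2,\eta_2)<h(\xi_1,\eta_2)+h(\xi_2,\eta_1)$; and (H4) if $(x_{-1},x_0,x_1)\ne(x'_{-1},x_0,x'_1)$ are both minimal then $(x_{-1}-x'_{-1})(x_1-x'_1)<0$. *)

theory Defs
  imports "HOL-Probability.Probability"
begin

definition Xsp :: "(nat \<Rightarrow> real) set" where
  "Xsp = {x. \<forall>i. x i \<in> {0..1}}"

definition dX :: "(nat \<Rightarrow> real) \<Rightarrow> (nat \<Rightarrow> real) \<Rightarrow> real" where
  "dX x y = (\<Sum>i. \<bar>x i - y i\<bar> / 2 ^ (i + 1))"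

definition shift :: "(nat \<Rightarrow> real) \<Rightarrow> (nat \<Rightarrow> real)" where
  "shift x = (\<lambda>i. x (Suc i))"

definition opensX :: "(nat \<Rightarrow> real) set set" where
  "opensX = {U. U \<subseteq> Xsp \<and> (\<forall>x\<in>U. \<exists>e>0. \<forall>y\<in>Xsp. dX x y < e \<longrightarrow> y \<in> U)}"

definition borelX :: "(nat \<Rightarrow> real) measure" where
  "borelX = sigma Xsp opensX"

definition inv_measures :: "(nat \<Rightarrow> real) measure set" where
  "inv_measures = {M. sets M = sets borelX \<and> prob_space M \<and> shift \<in> measurable M M \<and>
      (\<forall>A\<in>sets M. emeasure M (shift -` A \<inter> space M) = emeasure M A)}"

definition alpha :: "((nat \<Rightarrow> real) \<Rightarrow> real) \<Rightarrow> real" where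
  "alpha \<phi> = Inf ((\<lambda>M. integral\<^sup>L M \<phi>) ` inv_measures)"

definition Bset :: "(nat \<Rightarrow> real) \<Rightarrow> (nat \<Rightarrow> real) \<Rightarrow> nat \<Rightarrow> real \<Rightarrow> (nat \<Rightarrow> real) set" where
  "Bset x y n \<epsilon> = {z \<in> Xsp. dX x z < \<epsilon> \<and> dX ((shift ^^ n) z) y < \<epsilon>}"

definition peierls :: "((nat \<Rightarrow> real) \<Rightarrow> real) \<Rightarrow> (nat \<Rightarrow> real) \<Rightarrow> (nat \<Rightarrow> real) \<Rightarrow> ereal" where
  "peierls \<phi> x y = Lim (at_right (0::real)) (\<lambda>\<epsilon>.
      liminf (\<lambda>n. Inf ((\<lambda>z. ereal (\<Sum>i<n. \<phi> ((shift ^^ i) z) - alpha \<phi>)) ` Bset x y n \<epsilon>)))"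

definition action :: "(real \<Rightarrow> real \<Rightarrow> real) \<Rightarrow> real list \<Rightarrow> real" where
  "action h xs = (\<Sum>i<length xs - 1. h (xs ! i) (xs ! Suc i))"

definition minimal_seq :: "(real \<Rightarrow> real \<Rightarrow> real) \<Rightarrow> real list \<Rightarrow> bool" where
  "minimal_seq h xs \<longleftrightarrow> xs \<noteq> [] \<and> set xs \<subseteq> {0..1} \<and>
     (\<forall>ys. length ys = length xs \<and> set ys \<subseteq> {0..1} \<and> hd ys = hd xs \<and> last ys = last xs
        \<longrightarrow> action h xs \<le> action h ys)"

definition classH :: "(real \<Rightarrow> real \<Rightarrow> real) set" where
  "classH = {h.
     (\<exists>L. \<forall>x\<in>{0..1}. \<forall>y\<in>{0..1}. \<forall>x'\<in>{0..1}. \<forall>y'\<in>{0..1}.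
         \<bar>h x y - h x' y'\<bar> \<le> L * (\<bar>x - x'\<bar> + \<bar>y - y'\<bar>)) \<and>
     (\<forall>\<xi>1\<in>{0..1}. \<forall>\<xi>2\<in>{0..1}. \<forall>\<eta>1\<in>{0..1}. \<forall>\<eta>2\<in>{0..1}.
         \<xi>1 < \<xi>2 \<longrightarrow> \<eta>1 < \<eta>2 \<longrightarrow> h \<xi>1 \<eta>1 + h \<xi>2 \<eta>2 < h \<xi>1 \<eta>2 + h \<xi>2 \<eta>1) \<and>
     (\<forall>xm x0 x1 xm' x1'. minimal_seq h [xm, x0, x1] \<longrightarrow> minimal_seq h [xm', x0, x1'] \<longrightarrow>
         (xm, x1) \<noteq> (xm', x1') \<longrightarrow> (xm - xm') * (x1 - x1') < 0)}"

definition hstar :: "(real \<Rightarrow> real \<Rightarrow> real) \<Rightarrow> real" where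
  "hstar h = Inf ((\<lambda>x. h x x) ` {0..1})"

definition mset_h :: "(real \<Rightarrow> real \<Rightarrow> real) \<Rightarrow> real set" where
  "mset_h h = {a \<in> {0..1}. h a a = hstar h}"

definition const_seq :: "real \<Rightarrow> (nat \<Rightarrow> real)" where
  "const_seq a = (\<lambda>_. a)"

end

theory Submission
  imports Defs
begin

text \<open>
  The ergodic minimum of the potential is hstar h: the Dirac mass at a^\<infinity>, a \<in> m_h, attains it,
  and by the twist condition (H3) every closed orbit of length n has action at least n hstar h.
  Hence H(a^\<infinity>, b^\<infinity>) is at most the normalized action of any chain from a to b (pad the chain
  by copies of a and b), and at least minus the normalized action of any chain from b to a
  (close up a nearly optimal orbit from a to b with that chain).  On the interval between a
  and b, which lies in C(a) \<subseteq> m_h, the derivative hypothesis lets a step of length \<delta> cost o(\<delta>)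
  in the round trip, so there are chains from a to b whose round trip has arbitrarily small
  normalized action; the two bounds then force H(a^\<infinity>, b^\<infinity>) + H(b^\<infinity>, a^\<infinity>) = 0.
\<close>

section \<open>Twist generating functions and closed orbits\<close>

abbreviation potential :: "(real \<Rightarrow> real \<Rightarrow> real) \<Rightarrow> (nat \<Rightarrow> real) \<Rightarrow> real" where
  "potential h \<equiv> \<lambda>x. h (x 0) (x 1)"

definition lipschitz_unit_square :: "real \<Rightarrow> (real \<Rightarrow> real \<Rightarrow> real) \<Rightarrow> bool" where
  "lipschitz_unit_square L h \<longleftrightarrow> 0 \<le> L \<and>
     (\<forall>x\<in>{0..1}. \<forall>y\<in>{0..1}. \<forall>x'\<in>{0..1}. \<forall>y'\<in>{0..1}.
        \<bar>h x y - h x' y'\<bar> \<le> L * (\<bar>x - x'\<bar> + \<bar>y - y'\<bar>))"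

lemma lipschitz_unit_squareD:
  assumes "lipschitz_unit_square L h" "x \<in> {0..1}" "y \<in> {0..1}" "x' \<in> {0..1}" "y' \<in> {0..1}"
  shows "\<bar>h x y - h x' y'\<bar> \<le> L * (\<bar>x - x'\<bar> + \<bar>y - y'\<bar>)"
  using assms unfolding lipschitz_unit_square_def by blast

lemma lipschitz_unit_square_nonneg: "lipschitz_unit_square L h \<Longrightarrow> 0 \<le> L"
  unfolding lipschitz_unit_square_def by blast

lemma lipschitz_unit_square_bounded:
  assumes L: "lipschitz_unit_square L h" and "x \<in> {0..1}" "y \<in> {0..1}"
  shows "\<bar>h x y\<bar> \<le> \<bar>h 0 0\<bar> + 2 * L"
proof -
  have "\<bar>h x y - h 0 0\<bar> \<le> L * (\<bar>x - 0\<bar> + \<bar>y - 0\<bar>)"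
    using lipschitz_unit_squareD[OF L assms(2,3), of 0 0] by simp
  also have "\<dots> \<le> L * 2"
    using assms lipschitz_unit_square_nonneg[OF L] by (intro mult_left_mono) auto
  finally show ?thesis by linarith
qed

lemma classH_lipschitz:
  assumes "h \<in> classH"
  obtains L where "lipschitz_unit_square L h"
proof -
  from assms obtain L where L: "\<forall>x\<in>{0..1}. \<forall>y\<in>{0..1}. \<forall>x'\<in>{0..1}. \<forall>y'\<in>{0..1}.
      \<bar>h x y - h x' y'\<bar> \<le> L * (\<bar>x - x'\<bar> + \<bar>y - y'\<bar>)"
    unfolding classH_def by blast
  have "\<bar>h 0 0 - h 1 0\<bar> \<le> L * (\<bar>0 - 1\<bar> + \<bar>0 - 0\<bar>)"
    using L by (meson atLeastAtMost_iff order_refl zero_le_one)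
  then have "0 \<le> L" by simp
  with L show thesis by (intro that) (simp add: lipschitz_unit_square_def)
qed

lemma classH_twist:
  assumes "h \<in> classH" "x \<in> {0..1}" "y \<in> {0..1}" "m \<in> {0..1}" "x \<le> m" "y \<le> m"
  shows "h x y + h m m \<le> h x m + h m y"
proof (cases "x = m \<or> y = m")
  case False
  with assms(5,6) have "x < m" "y < m" by auto
  moreover have "\<forall>\<xi>1\<in>{0..1}. \<forall>\<xi>2\<in>{0..1}. \<forall>\<eta>1\<in>{0..1}. \<forall>\<eta>2\<in>{0..1}.
      \<xi>1 < \<xi>2 \<longrightarrow> \<eta>1 < \<eta>2 \<longrightarrow> h \<xi>1 \<eta>1 + h \<xi>2 \<eta>2 < h \<xi>1 \<eta>2 + h \<xi>2 \<eta>1"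
    using assms(1) unfolding classH_def by blast
  ultimately show ?thesis using assms(2-4) by fastforce
qed auto

lemma hstar_le:
  assumes "h \<in> classH" "x \<in> {0..1}"
  shows "hstar h \<le> h x x"
proof -
  obtain L where L: "lipschitz_unit_square L h" using classH_lipschitz[OF assms(1)] .
  have "bdd_below ((\<lambda>x. h x x) ` {0..1})"
  proof (rule bdd_belowI2)
    fix x :: real assume "x \<in> {0..1}"
    then show "- \<bar>h 0 0\<bar> - 2 * L \<le> h x x"
      using lipschitz_unit_square_bounded[OF L, of x x] by linarith
  qed
  with assms(2) show ?thesis unfolding hstar_def by (intro cInf_lower) auto
qed

lemma action_Nil [simp]: "action h [] = 0"
  and action_singleton [simp]: "action h [x] = 0"
  and action_Cons_Cons [simp]: "action h (x # y # ys) = h x y + action h (y # ys)"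
  unfolding action_def by (simp_all add: sum.lessThan_Suc_shift del: sum.lessThan_Suc)

lemma action_Cons: "ys \<noteq> [] \<Longrightarrow> action h (x # ys) = h x (hd ys) + action h ys"
  by (cases ys) simp_all

lemma action_snoc: "xs \<noteq> [] \<Longrightarrow> action h (xs @ [y]) = action h xs + h (last xs) y"
  by (induction xs rule: induct_list012) auto

lemma action_map_upt: "action h (map f [0..<Suc n]) = (\<Sum>i<n. h (f i) (f (Suc i)))"
  unfolding action_def by (rule sum.cong) (simp_all del: upt_Suc)

definition closed_action :: "(real \<Rightarrow> real \<Rightarrow> real) \<Rightarrow> real list \<Rightarrow> real" where
  "closed_action h xs = action h xs + h (last xs) (hd xs)"

lemma closed_action_rotate1: "closed_action h (rotate1 xs) = closed_action h xs"
proof (cases xs)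
  case (Cons x ys)
  then show ?thesis
    by (cases "ys = []") (simp_all add: closed_action_def action_snoc action_Cons)
qed simp

lemma closed_action_rotate: "closed_action h (rotate n xs) = closed_action h xs"
  by (induction n) (simp_all only: rotate0 id_apply rotate_Suc closed_action_rotate1)

text \<open>Deleting a maximal point m from a cycle lowers its action by at least
  h m m \<ge> hstar h, by the twist condition (H3).\<close>
lemma closed_action_ge:
  assumes h: "h \<in> classH"
  shows "xs \<noteq> [] \<Longrightarrow> set xs \<subseteq> {0..1} \<Longrightarrow> real (length xs) * hstar h \<le> closed_action h xs"
proof (induction "length xs" arbitrary: xs rule: less_induct)
  case less
  show ?case
  proof (cases "length xs = 1")
    case True
    then obtain x where "xs = [x]" by (cases xs) auto
    with less.prems hstar_le[OF h, of x] show ?thesis by (simp add: closed_action_def)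
  next
    case False
    define m where "m = Max (set xs)"
    have m: "m \<in> set xs" and le_m: "\<And>y. y \<in> set xs \<Longrightarrow> y \<le> m"
      using less.prems unfolding m_def by simp_all
    then have m01: "m \<in> {0..1}" using less.prems by auto
    obtain us vs where xs: "xs = us @ m # vs" using split_list[OF m] by blast
    define ys where "ys = vs @ us"
    have rot: "rotate (length (us @ [m])) xs = ys @ [m]"
      unfolding xs ys_def using rotate_append[of "us @ [m]" vs] by simp
    have ys: "ys \<noteq> []" "set ys \<subseteq> set xs" "length xs = Suc (length ys)"
      using False unfolding xs ys_def by auto
    have "last ys \<in> set xs" "hd ys \<in> set xs" using ys(1,2) by auto
    then have twist: "h (last ys) (hd ys) + h m m \<le> h (last ys) m + h m (hd ys)"
      using classH_twist[OF h _ _ m01 le_m le_m] less.prems(2) by blast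
    have "closed_action h xs = closed_action h (ys @ [m])"
      unfolding rot[symmetric] by (rule closed_action_rotate[symmetric])
    also have "\<dots> = action h ys + h (last ys) m + h m (hd ys)"
      using ys(1) by (simp add: closed_action_def action_snoc)
    finally have "closed_action h ys + h m m \<le> closed_action h xs"
      using twist unfolding closed_action_def by linarith
    moreover have "real (length ys) * hstar h \<le> closed_action h ys"
      by (rule less.hyps) (use ys less.prems(2) in auto)
    moreover have "real (length xs) * hstar h = real (length ys) * hstar h + hstar h"
      using ys(3) by (simp add: algebra_simps)
    ultimately show ?thesis using hstar_le[OF h m01] by linarith
  qed
qed

lemma sum_orbit_ge:
  assumes h: "h \<in> classH" and L: "lipschitz_unit_square L h" and f: "\<And>i. f i \<in> {0..1}"
  shows "real n * hstar h - L * \<bar>f n - f 0\<bar> \<le> (\<Sum>i<n. h (f i) (f (Suc i)))"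
proof (cases n)
  case 0
  then show ?thesis using lipschitz_unit_square_nonneg[OF L] by simp
next
  case (Suc k)
  have "set (map f [0..<Suc k]) \<subseteq> {0..1}" using f by auto
  with closed_action_ge[OF h, of "map f [0..<Suc k]"]
  have "real (Suc k) * hstar h \<le> closed_action h (map f [0..<Suc k])"
    by (simp del: upt_Suc)
  also have "\<dots> = (\<Sum>i<k. h (f i) (f (Suc i))) + h (f k) (f 0)"
    unfolding closed_action_def action_map_upt by (simp del: upt_Suc add: hd_map last_map)
  finally have "real (Suc k) * hstar h \<le> (\<Sum>i<k. h (f i) (f (Suc i))) + h (f k) (f 0)" .
  moreover have "h (f k) (f 0) - h (f k) (f (Suc k)) \<le> L * \<bar>f (Suc k) - f 0\<bar>"
    using lipschitz_unit_squareD[OF L f f f f, of k 0 k "Suc k"] by (simp add: abs_le_iff abs_minus_commute)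
  ultimately show ?thesis using Suc by (simp add: algebra_simps)
qed

definition normalized_action :: "(real \<Rightarrow> real \<Rightarrow> real) \<Rightarrow> real list \<Rightarrow> real" where
  "normalized_action h xs = action h xs - real (length xs - 1) * hstar h"

lemma normalized_action_eq_sum:
  "normalized_action h xs = (\<Sum>j<length xs - 1. h (xs ! j) (xs ! Suc j) - hstar h)"
  by (simp add: normalized_action_def action_def sum_subtractf)

lemma normalized_action_snoc:
  assumes "xs \<noteq> []"
  shows "normalized_action h (xs @ [y]) = normalized_action h xs + h (last xs) y - hstar h"
proof -
  obtain n where "length xs = Suc n" using assms by (cases xs) auto
  then show ?thesis
    unfolding normalized_action_def action_snoc[OF assms] by (simp add: algebra_simps)
qed

lemma normalized_action_Cons:
  assumes "ys \<noteq> []"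
  shows "normalized_action h (y # ys) = h y (hd ys) - hstar h + normalized_action h ys"
proof -
  obtain n where "length ys = Suc n" using assms by (cases ys) auto
  then show ?thesis
    unfolding normalized_action_def action_Cons[OF assms] by (simp add: algebra_simps)
qed

section \<open>The shift space\<close>

lemma funpow_shift: "(shift ^^ n) x = (\<lambda>i. x (i + n))"
  by (induction n arbitrary: x) (auto simp: shift_def funpow_Suc_right)

lemma funpow_shift_Xsp: "x \<in> Xsp \<Longrightarrow> (shift ^^ n) x \<in> Xsp"
  by (simp add: Xsp_def funpow_shift)

lemma const_seq_Xsp: "a \<in> {0..1} \<Longrightarrow> const_seq a \<in> Xsp"
  by (simp add: Xsp_def const_seq_def)

lemma dX_term_le:
  assumes "x \<in> Xsp" "y \<in> Xsp"
  shows "\<bar>x i - y i\<bar> / 2 ^ (i + 1) \<le> (1/2) ^ Suc i"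
proof -
  have "\<bar>x i - y i\<bar> \<le> 1" using assms by (auto simp: Xsp_def abs_le_iff dest!: spec[of _ i])
  then show ?thesis by (simp add: divide_right_mono power_one_over)
qed

lemma dX_summable: "x \<in> Xsp \<Longrightarrow> y \<in> Xsp \<Longrightarrow> summable (\<lambda>i. \<bar>x i - y i\<bar> / 2 ^ (i + 1))"
  by (rule summable_comparison_test'[of "\<lambda>i. (1/2) ^ Suc i" 0])
     (use power_half_series summable_def dX_term_le in auto)

lemma dX_le_1:
  assumes "x \<in> Xsp" "y \<in> Xsp"
  shows "dX x y \<le> 1"
proof -
  have "dX x y \<le> (\<Sum>i. (1/2::real) ^ Suc i)"
    unfolding dX_def
    by (rule suminf_le) (use dX_term_le[OF assms] dX_summable[OF assms] power_half_series summable_def in auto)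
  also have "\<dots> = 1" using power_half_series sums_unique by metis
  finally show ?thesis .
qed

lemma dX_coordinate_le:
  assumes "x \<in> Xsp" "y \<in> Xsp"
  shows "\<bar>x i - y i\<bar> \<le> 2 ^ (i + 1) * dX x y"
proof -
  have "\<bar>x i - y i\<bar> / 2 ^ (i + 1) = (\<Sum>j\<in>{i}. \<bar>x j - y j\<bar> / 2 ^ (j + 1))" by simp
  also have "\<dots> \<le> dX x y"
    unfolding dX_def by (rule sum_le_suminf[OF dX_summable[OF assms]]) auto
  finally show ?thesis by (simp add: field_simps)
qed

lemma dX_split:
  assumes "x \<in> Xsp" "y \<in> Xsp"
  shows "dX x y = (\<Sum>i<N. \<bar>x i - y i\<bar> / 2 ^ (i + 1)) + dX ((shift ^^ N) x) ((shift ^^ N) y) / 2 ^ N"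
proof -
  have tail: "summable (\<lambda>i. \<bar>x (i + N) - y (i + N)\<bar> / 2 ^ (i + 1))"
    using dX_summable[OF funpow_shift_Xsp[OF assms(1)] funpow_shift_Xsp[OF assms(2)], of N]
    by (simp add: funpow_shift)
  have "dX x y = (\<Sum>i. \<bar>x (i + N) - y (i + N)\<bar> / 2 ^ (i + N + 1)) + (\<Sum>i<N. \<bar>x i - y i\<bar> / 2 ^ (i + 1))"
    unfolding dX_def using suminf_split_initial_segment[OF dX_summable[OF assms], of N] by simp
  also have "(\<Sum>i. \<bar>x (i + N) - y (i + N)\<bar> / 2 ^ (i + N + 1))
      = (\<Sum>i. \<bar>x (i + N) - y (i + N)\<bar> / 2 ^ (i + 1)) / 2 ^ N"
    using suminf_divide[OF tail, of "2 ^ N"] by (simp add: power_add field_simps)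
  finally show ?thesis by (simp add: dX_def funpow_shift)
qed

lemma dX_shift_le:
  assumes "x \<in> Xsp" "y \<in> Xsp"
  shows "dX (shift x) (shift y) \<le> 2 * dX x y"
  using dX_split[OF assms, of 1] by simp

lemma dX_le_if_eq_upto:
  assumes "x \<in> Xsp" "y \<in> Xsp" "\<And>i. i < N \<Longrightarrow> x i = y i"
  shows "dX x y \<le> (1/2) ^ N"
proof -
  have "dX x y = dX ((shift ^^ N) x) ((shift ^^ N) y) / 2 ^ N"
    using dX_split[OF assms(1,2), of N] assms(3) by simp
  also have "\<dots> \<le> 1 / 2 ^ N"
    using dX_le_1[OF funpow_shift_Xsp[OF assms(1)] funpow_shift_Xsp[OF assms(2)]]
    by (simp add: divide_right_mono)
  finally show ?thesis by (simp add: power_one_over)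
qed

lemma opensX_subset_Pow: "opensX \<subseteq> Pow Xsp"
  unfolding opensX_def by auto

lemma space_borelX [simp]: "space borelX = Xsp"
  unfolding borelX_def using opensX_subset_Pow by (simp add: space_measure_of_conv)

lemma opensX_sets_borelX: "U \<in> opensX \<Longrightarrow> U \<in> sets borelX"
  unfolding borelX_def using opensX_subset_Pow by (simp add: sets_measure_of_conv)

lemma vimage_open_opensX_if_lipschitz:
  assumes "0 \<le> K" "\<And>x y. x \<in> Xsp \<Longrightarrow> y \<in> Xsp \<Longrightarrow> \<bar>f x - f y\<bar> \<le> K * dX x y" "open S"
  shows "f -` S \<inter> Xsp \<in> opensX"
  unfolding opensX_def
proof safe
  fix x assume x: "x \<in> Xsp" "f x \<in> S"
  obtain e where e: "e > 0" "\<And>y. dist y (f x) < e \<Longrightarrow> y \<in> S"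
    using assms(3) x(2) open_dist by metis
  show "\<exists>e>0. \<forall>y\<in>Xsp. dX x y < e \<longrightarrow> y \<in> f -` S \<inter> Xsp"
  proof (intro exI[of _ "e / (K + 1)"] conjI ballI impI)
    show "0 < e / (K + 1)" using e assms(1) by simp
    fix y assume y: "y \<in> Xsp" "dX x y < e / (K + 1)"
    have "\<bar>f x - f y\<bar> \<le> K * dX x y" using assms(2) x y by blast
    also have "\<dots> \<le> K * (e / (K + 1))" using y assms(1) by (intro mult_left_mono) auto
    also have "\<dots> < e" using e assms(1) by (simp add: field_simps)
    finally show "y \<in> f -` S \<inter> Xsp" using e y by (auto simp: dist_real_def abs_minus_commute)
  qed
qed

lemma shift_measurable: "shift \<in> borelX \<rightarrow>\<^sub>M borelX"
proof -
  have "shift \<in> borelX \<rightarrow>\<^sub>M measure_of Xsp opensX (\<lambda>_. 0)"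
  proof (rule measurable_measure_of[OF opensX_subset_Pow])
    show "shift \<in> space borelX \<rightarrow> Xsp" by (auto simp: Xsp_def shift_def)
    fix A assume A: "A \<in> opensX"
    have "shift -` A \<inter> Xsp \<in> opensX"
      unfolding opensX_def
    proof safe
      fix x assume x: "x \<in> Xsp" "shift x \<in> A"
      obtain e where e: "e > 0" "\<forall>y\<in>Xsp. dX (shift x) y < e \<longrightarrow> y \<in> A"
        using A x unfolding opensX_def by blast
      show "\<exists>e>0. \<forall>y\<in>Xsp. dX x y < e \<longrightarrow> y \<in> shift -` A \<inter> Xsp"
      proof (intro exI[of _ "e / 2"] conjI ballI impI)
        fix y assume y: "y \<in> Xsp" "dX x y < e / 2"
        then have "shift y \<in> Xsp" "dX (shift x) (shift y) < e"
          using dX_shift_le[OF x(1) y(1)] by (auto simp: Xsp_def shift_def)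
        then show "y \<in> shift -` A \<inter> Xsp" using e y by auto
      qed (use e in simp)
    qed
    then show "shift -` A \<inter> space borelX \<in> sets borelX" by (simp add: opensX_sets_borelX)
  qed
  then show ?thesis by (simp add: borelX_def)
qed

lemma potential_measurable:
  assumes "lipschitz_unit_square L h"
  shows "potential h \<in> borel_measurable borelX"
proof (rule borel_measurableI)
  fix S :: "real set" assume S: "open S"
  have "potential h -` S \<inter> Xsp \<in> opensX"
  proof (rule vimage_open_opensX_if_lipschitz[where K = "6 * L"])
    show "0 \<le> 6 * L" using lipschitz_unit_square_nonneg[OF assms] by simp
    fix x y assume xy: "x \<in> Xsp" "y \<in> Xsp"
    have "\<bar>h (x 0) (x 1) - h (y 0) (y 1)\<bar> \<le> L * (\<bar>x 0 - y 0\<bar> + \<bar>x 1 - y 1\<bar>)"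
      using lipschitz_unit_squareD[OF assms] xy by (simp add: Xsp_def)
    also have "\<dots> \<le> L * (2 * dX x y + 4 * dX x y)"
      using dX_coordinate_le[OF xy, of 0] dX_coordinate_le[OF xy, of 1] lipschitz_unit_square_nonneg[OF assms]
      by (intro mult_left_mono) auto
    finally show "\<bar>h (x 0) (x 1) - h (y 0) (y 1)\<bar> \<le> 6 * L * dX x y" by simp
  qed (rule S)
  then show "potential h -` S \<inter> space borelX \<in> sets borelX" by (simp add: opensX_sets_borelX)
qed

section \<open>The ergodic minimum\<close>

lemma inv_measuresD:
  assumes "M \<in> inv_measures"
  shows "sets M = sets borelX" "space M = Xsp" "prob_space M" "shift \<in> M \<rightarrow>\<^sub>M M"
    and "distr M M shift = M"
proof -
  show sets: "sets M = sets borelX" and "prob_space M" and sh: "shift \<in> M \<rightarrow>\<^sub>M M"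
    using assms unfolding inv_measures_def by auto
  show "space M = Xsp" using sets_eq_imp_space_eq[OF sets] by simp
  show "distr M M shift = M"
  proof (rule measure_eqI)
    fix A assume "A \<in> sets (distr M M shift)"
    then have "A \<in> sets M" by simp
    then show "emeasure (distr M M shift) A = emeasure M A"
      using emeasure_distr[OF sh] assms unfolding inv_measures_def by auto
  qed simp
qed

lemma funpow_shift_measurable: "shift \<in> M \<rightarrow>\<^sub>M M \<Longrightarrow> (shift ^^ n) \<in> M \<rightarrow>\<^sub>M M"
  by (induction n) (simp_all add: funpow_Suc_right measurable_comp)

lemma integral_funpow_shift:
  fixes f :: "(nat \<Rightarrow> real) \<Rightarrow> real"
  assumes M: "M \<in> inv_measures" and f: "f \<in> borel_measurable M"
  shows "(\<integral>x. f ((shift ^^ n) x) \<partial>M) = integral\<^sup>L M f"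
proof (induction n)
  case (Suc n)
  have "(\<integral>x. f ((shift ^^ Suc n) x) \<partial>M) = (\<integral>x. f ((shift ^^ n) (shift x)) \<partial>M)"
    by (simp only: funpow_Suc_right comp_def)
  also have "\<dots> = (\<integral>x. f ((shift ^^ n) x) \<partial>distr M M shift)"
    using integral_distr[OF inv_measuresD(4)[OF M]
        measurable_compose[OF funpow_shift_measurable[OF inv_measuresD(4)[OF M], of n] f]]
    by simp
  finally show ?case using Suc by (simp add: inv_measuresD(5)[OF M])
qed simp

lemma integral_potential_Birkhoff_ge:
  assumes h: "h \<in> classH" and L: "lipschitz_unit_square L h" and M: "M \<in> inv_measures"
  shows "real n * hstar h - L \<le> real n * integral\<^sup>L M (potential h)"
proof -
  interpret prob_space M using inv_measuresD(3)[OF M] .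
  have meas: "potential h \<in> borel_measurable M"
    using potential_measurable[OF L] measurable_cong_sets[OF inv_measuresD(1)[OF M] refl] by blast
  have integrable: "integrable M (\<lambda>x. potential h ((shift ^^ i) x))" for i
  proof (rule integrable_const_bound[where B = "\<bar>h 0 0\<bar> + 2 * L"])
    show "AE x in M. norm (potential h ((shift ^^ i) x)) \<le> \<bar>h 0 0\<bar> + 2 * L"
      using lipschitz_unit_square_bounded[OF L]
      by (intro AE_I2) (simp add: inv_measuresD(2)[OF M] funpow_shift Xsp_def)
  qed (rule measurable_compose[OF funpow_shift_measurable[OF inv_measuresD(4)[OF M]] meas])
  have "real n * integral\<^sup>L M (potential h) = (\<Sum>i<n. \<integral>x. potential h ((shift ^^ i) x) \<partial>M)"
    using integral_funpow_shift[OF M meas] by simp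
  also have "\<dots> = (\<integral>x. (\<Sum>i<n. h (x i) (x (Suc i))) \<partial>M)"
    using integrable by (simp add: funpow_shift)
  finally have "real n * integral\<^sup>L M (potential h) = \<dots>" .
  moreover have "real n * hstar h - L \<le> (\<integral>x. (\<Sum>i<n. h (x i) (x (Suc i))) \<partial>M)"
  proof (rule integral_ge_const)
    show "integrable M (\<lambda>x. \<Sum>i<n. h (x i) (x (Suc i)))"
      using integrable by (simp add: funpow_shift)
    show "AE x in M. real n * hstar h - L \<le> (\<Sum>i<n. h (x i) (x (Suc i)))"
    proof (rule AE_I2)
      fix x assume "x \<in> space M"
      then have x: "\<And>i. x i \<in> {0..1}" by (simp add: inv_measuresD(2)[OF M] Xsp_def)
      have "L * \<bar>x n - x 0\<bar> \<le> L * 1"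
        using x[of n] x[of 0] lipschitz_unit_square_nonneg[OF L] by (intro mult_left_mono) auto
      then show "real n * hstar h - L \<le> (\<Sum>i<n. h (x i) (x (Suc i)))"
        using sum_orbit_ge[OF h L, of x n] x by simp
    qed
  qed
  ultimately show ?thesis by simp
qed

lemma integral_potential_ge_hstar:
  assumes h: "h \<in> classH" and M: "M \<in> inv_measures"
  shows "hstar h \<le> integral\<^sup>L M (potential h)"
proof (rule ccontr)
  obtain L where L: "lipschitz_unit_square L h" using classH_lipschitz[OF h] .
  assume "\<not> ?thesis"
  then obtain n where "L < real n * (hstar h - integral\<^sup>L M (potential h))"
    using reals_Archimedean3[of "hstar h - integral\<^sup>L M (potential h)"] by auto
  with integral_potential_Birkhoff_ge[OF h L M, of n] show False
    by (simp add: algebra_simps)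
qed

lemma return_fixed_point_inv_measures:
  assumes x: "x \<in> Xsp" "shift x = x"
  shows "return borelX x \<in> inv_measures"
  unfolding inv_measures_def
proof (intro CollectI conjI ballI)
  show "prob_space (return borelX x)" by (rule prob_space_return) (simp add: x(1))
  show "shift \<in> return borelX x \<rightarrow>\<^sub>M return borelX x" using shift_measurable by simp
  fix A assume "A \<in> sets (return borelX x)"
  then have A: "A \<in> sets borelX" by simp
  have pre: "shift -` A \<inter> Xsp \<in> sets borelX"
    using measurable_sets[OF shift_measurable A] by simp
  have "emeasure (return borelX x) (shift -` A \<inter> Xsp) = indicator (shift -` A \<inter> Xsp) x"
    by (rule emeasure_return[OF pre])
  also have "\<dots> = indicator A x" using x by (simp add: indicator_def)
  also have "\<dots> = emeasure (return borelX x) A" by (rule emeasure_return[OF A, symmetric])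
  finally show "emeasure (return borelX x) (shift -` A \<inter> space (return borelX x)) = emeasure (return borelX x) A"
    by simp
qed simp

lemma alpha_potential_eq_hstar:
  assumes h: "h \<in> classH" and a: "a \<in> mset_h h"
  shows "alpha (potential h) = hstar h"
proof -
  obtain L where L: "lipschitz_unit_square L h" using classH_lipschitz[OF h] .
  let ?I = "(\<lambda>M. integral\<^sup>L M (potential h)) ` inv_measures"
  have haa: "h a a = hstar h" and a_seq: "const_seq a \<in> Xsp"
    using a by (simp_all add: mset_h_def const_seq_Xsp)
  define D where "D = return borelX (const_seq a)"
  have "shift (const_seq a) = const_seq a" by (simp add: shift_def const_seq_def)
  then have D: "D \<in> inv_measures"
    unfolding D_def by (rule return_fixed_point_inv_measures[OF a_seq])
  have "integral\<^sup>L D (potential h) = h a a"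
    unfolding D_def using integral_return[OF _ potential_measurable[OF L]] a_seq
    by (simp add: const_seq_def)
  then have mem: "h a a \<in> ?I" by (rule image_eqI[OF sym D])
  have lower: "\<And>y. y \<in> ?I \<Longrightarrow> hstar h \<le> y"
    using integral_potential_ge_hstar[OF h] by blast
  then have "bdd_below ?I" by (rule bdd_belowI)
  then have "alpha (potential h) \<le> h a a" unfolding alpha_def by (rule cInf_lower[OF mem])
  moreover have "hstar h \<le> alpha (potential h)"
    unfolding alpha_def using mem lower by (intro cInf_greatest) auto
  ultimately show ?thesis using haa by simp
qed

section \<open>Bounds for the Peierls barrier\<close>

definition min_action :: "(real \<Rightarrow> real \<Rightarrow> real) \<Rightarrow> (nat \<Rightarrow> real) \<Rightarrow> (nat \<Rightarrow> real) \<Rightarrow> nat \<Rightarrow> real \<Rightarrow> ereal" where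
  "min_action h x y n \<epsilon> = (INF z\<in>Bset x y n \<epsilon>. ereal (\<Sum>i<n. h (z i) (z (Suc i)) - hstar h))"

lemma tendsto_SUP_at_right_0:
  fixes F :: "real \<Rightarrow> 'a :: {complete_linorder, linorder_topology}"
  assumes "\<And>x y. 0 < x \<Longrightarrow> x \<le> y \<Longrightarrow> F y \<le> F x"
  shows "(F \<longlongrightarrow> (SUP e\<in>{0<..}. F e)) (at_right 0)"
proof (rule increasing_tendsto)
  show "\<forall>\<^sub>F e in at_right 0. F e \<le> (SUP e\<in>{0<..}. F e)"
    unfolding eventually_at_right_field by (intro exI[of _ 1]) (auto intro: SUP_upper)
  fix x assume "x < (SUP e\<in>{0<..}. F e)"
  then obtain e0 where e0: "e0 > 0" "x < F e0" by (auto simp: less_SUP_iff)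
  show "\<forall>\<^sub>F e in at_right 0. x < F e"
    unfolding eventually_at_right_field
    using e0 assms by (intro exI[of _ e0]) (auto intro: less_le_trans)
qed

lemma peierls_potential_eq_SUP:
  assumes "alpha (potential h) = hstar h"
  shows "peierls (potential h) x y = (SUP \<epsilon>\<in>{0<..}. liminf (\<lambda>n. min_action h x y n \<epsilon>))"
proof -
  have "peierls (potential h) x y = Lim (at_right 0) (\<lambda>\<epsilon>. liminf (\<lambda>n. min_action h x y n \<epsilon>))"
    unfolding peierls_def min_action_def assms by (simp add: funpow_shift)
  moreover have "liminf (\<lambda>n. min_action h x y n \<epsilon>') \<le> liminf (\<lambda>n. min_action h x y n \<epsilon>)"
    if "\<epsilon> \<le> \<epsilon>'" for \<epsilon> \<epsilon>'
  proof (intro Liminf_mono always_eventually allI)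
    fix n
    have "Bset x y n \<epsilon> \<subseteq> Bset x y n \<epsilon>'" using that unfolding Bset_def by auto
    then show "min_action h x y n \<epsilon>' \<le> min_action h x y n \<epsilon>"
      unfolding min_action_def by (rule INF_superset_mono) simp
  qed
  ultimately show ?thesis
    by (simp add: tendsto_Lim[OF _ tendsto_SUP_at_right_0])
qed

lemma sum_lessThan_add:
  fixes f :: "nat \<Rightarrow> 'a :: comm_monoid_add"
  shows "(\<Sum>i<m + n. f i) = (\<Sum>i<m. f i) + (\<Sum>i<n. f (m + i))"
  by (induction n) (simp_all add: add.assoc)

text \<open>Padding a chain by copies of its endpoints does not change its cost.\<close>
lemma sum_clamped_index:
  fixes g :: "nat \<Rightarrow> nat \<Rightarrow> 'a :: comm_monoid_add"
  assumes "g 0 0 = 0" "g k k = 0" "N + k \<le> n"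
  shows "(\<Sum>i<n. g (min (i - N) k) (min (Suc i - N) k)) = (\<Sum>j<k. g j (Suc j))"
proof -
  obtain r where n: "n = N + (k + r)" using assms(3) by (metis add.assoc le_iff_add)
  show ?thesis
    unfolding n sum_lessThan_add using assms(1,2) by simp
qed

lemma min_action_eventually_le:
  assumes xs: "xs \<noteq> []" "set xs \<subseteq> {0..1}"
    and diag: "h (hd xs) (hd xs) = hstar h" "h (last xs) (last xs) = hstar h"
    and "\<epsilon> > 0"
  shows "\<forall>\<^sub>F n in sequentially.
           min_action h (const_seq (hd xs)) (const_seq (last xs)) n \<epsilon> \<le> ereal (normalized_action h xs)"
proof -
  define k where "k = length xs - 1"
  obtain N where N: "(1/2::real) ^ N < \<epsilon>" using real_arch_pow_inv[OF \<open>\<epsilon> > 0\<close>] by force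
  define z where "z = (\<lambda>i. xs ! min (i - N) k)"
  have hd_last: "xs ! 0 = hd xs" "xs ! k = last xs"
    using xs(1) by (simp_all add: hd_conv_nth last_conv_nth k_def)
  have "xs ! j \<in> {0..1}" if "j \<le> k" for j
    using that xs unfolding k_def by (metis Suc_pred' le_imp_less_Suc length_greater_0_conv nth_mem subsetD)
  then have zX: "z \<in> Xsp" by (simp add: z_def Xsp_def)
  have hd01: "hd xs \<in> {0..1}" using xs(2) hd_in_set[OF xs(1)] by blast
  have "min_action h (const_seq (hd xs)) (const_seq (last xs)) n \<epsilon> \<le> ereal (normalized_action h xs)"
    if n: "N + k \<le> n" for n
  proof -
    have "dX (const_seq (hd xs)) z \<le> (1/2) ^ N"
      by (rule dX_le_if_eq_upto[OF const_seq_Xsp[OF hd01] zX]) (simp add: z_def const_seq_def hd_last)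
    moreover have "(shift ^^ n) z = const_seq (last xs)"
    proof
      fix i
      have "min (i + n - N) k = k" using n by simp
      then show "(shift ^^ n) z i = const_seq (last xs) i"
        by (simp add: funpow_shift z_def const_seq_def hd_last)
    qed
    moreover have "dX (const_seq (last xs)) (const_seq (last xs)) = 0" by (simp add: dX_def)
    ultimately have zB: "z \<in> Bset (const_seq (hd xs)) (const_seq (last xs)) n \<epsilon>"
      using zX N \<open>\<epsilon> > 0\<close> by (simp add: Bset_def)
    have "(\<Sum>i<n. h (z i) (z (Suc i)) - hstar h) = normalized_action h xs"
      unfolding normalized_action_eq_sum z_def k_def[symmetric]
      by (rule sum_clamped_index[where g = "\<lambda>i j. h (xs ! i) (xs ! j) - hstar h"])
         (use n diag hd_last in simp_all)
    then show ?thesis unfolding min_action_def by (intro INF_lower2[OF zB]) simp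
  qed
  then show ?thesis unfolding eventually_sequentially by blast
qed

lemma peierls_le_normalized_action:
  assumes "alpha (potential h) = hstar h"
    and "xs \<noteq> []" "set xs \<subseteq> {0..1}" "h (hd xs) (hd xs) = hstar h" "h (last xs) (last xs) = hstar h"
  shows "peierls (potential h) (const_seq (hd xs)) (const_seq (last xs)) \<le> ereal (normalized_action h xs)"
  unfolding peierls_potential_eq_SUP[OF assms(1)]
proof (rule SUP_least)
  fix \<epsilon> :: real
  let ?f = "\<lambda>n. min_action h (const_seq (hd xs)) (const_seq (last xs)) n \<epsilon>"
  assume "\<epsilon> \<in> {0<..}"
  then have "limsup ?f \<le> ereal (normalized_action h xs)"
    using min_action_eventually_le[OF assms(2-5)] by (intro Limsup_bounded) auto
  moreover have "liminf ?f \<le> limsup ?f" by (rule Liminf_le_Limsup) simp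
  ultimately show "liminf ?f \<le> ereal (normalized_action h xs)" by (rule order_trans[rotated])
qed

lemma Bset_const_seq_endpoints:
  assumes "a \<in> {0..1}" "b \<in> {0..1}" "z \<in> Bset (const_seq a) (const_seq b) n \<epsilon>"
  shows "\<bar>z 0 - a\<bar> < 2 * \<epsilon>" "\<bar>z n - b\<bar> < 2 * \<epsilon>" "\<And>i. z i \<in> {0..1}"
proof -
  have z: "z \<in> Xsp" "dX (const_seq a) z < \<epsilon>" "dX ((shift ^^ n) z) (const_seq b) < \<epsilon>"
    using assms(3) by (auto simp: Bset_def)
  show "\<bar>z 0 - a\<bar> < 2 * \<epsilon>"
    using dX_coordinate_le[OF const_seq_Xsp[OF assms(1)] z(1), of 0] z(2)
    by (simp add: const_seq_def abs_minus_commute)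
  show "\<bar>z n - b\<bar> < 2 * \<epsilon>"
    using dX_coordinate_le[OF funpow_shift_Xsp[OF z(1), of n] const_seq_Xsp[OF assms(2)], of 0] z(3)
    by (simp add: const_seq_def funpow_shift)
  show "\<And>i. z i \<in> {0..1}" using z(1) by (simp add: Xsp_def)
qed

lemma sum_orbit_concat_ge:
  assumes h: "h \<in> classH" and L: "lipschitz_unit_square L h"
    and z: "\<And>i. z i \<in> {0..1}" and w: "\<And>i. w i \<in> {0..1}" and n: "n \<ge> 1"
  shows "- L * \<bar>w m - z 0\<bar> - L * \<bar>w 0 - z n\<bar> \<le>
    (\<Sum>i<n. h (z i) (z (Suc i)) - hstar h) + (\<Sum>i<m. h (w i) (w (Suc i)) - hstar h)"
proof -
  define F where "F = (\<lambda>i. if i < n then z i else w (i - n))"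
  obtain n' where n': "n = Suc n'" using n by (cases n) auto
  have F01: "\<And>i. F i \<in> {0..1}" using z w by (simp add: F_def)
  have F_ends: "F 0 = z 0" "F (n + m) = w m" using n by (auto simp: F_def)
  have "(\<Sum>i<n'. h (F i) (F (Suc i))) = (\<Sum>i<n'. h (z i) (z (Suc i)))"
    by (rule sum.cong) (auto simp: F_def n')
  moreover have "h (z n') (w 0) - h (z n') (z n) \<le> L * (\<bar>z n' - z n'\<bar> + \<bar>w 0 - z n\<bar>)"
    using lipschitz_unit_squareD[OF L z w z z, of n' 0 n' n] by (simp add: abs_le_iff)
  ultimately have first: "(\<Sum>i<n. h (F i) (F (Suc i))) \<le> (\<Sum>i<n. h (z i) (z (Suc i))) + L * \<bar>w 0 - z n\<bar>"
    by (simp add: F_def n')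
  have second: "(\<Sum>i<m. h (F (n + i)) (F (Suc (n + i)))) = (\<Sum>i<m. h (w i) (w (Suc i)))"
    by (simp add: F_def)
  have "real (n + m) * hstar h - L * \<bar>w m - z 0\<bar> \<le> (\<Sum>i<n + m. h (F i) (F (Suc i)))"
    using sum_orbit_ge[where f = F and n = "n + m", OF h L F01] F_ends by simp
  also have "\<dots> \<le> (\<Sum>i<n. h (z i) (z (Suc i))) + L * \<bar>w 0 - z n\<bar> + (\<Sum>i<m. h (w i) (w (Suc i)))"
    unfolding sum_lessThan_add using first second by simp
  finally show ?thesis by (simp add: sum_subtractf algebra_simps)
qed

lemma min_action_ge_if_reverse_le:
  assumes h: "h \<in> classH" and L: "lipschitz_unit_square L h"
    and ab: "a \<in> {0..1}" "b \<in> {0..1}" and n: "n \<ge> 1"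
    and c: "min_action h (const_seq b) (const_seq a) m \<epsilon> \<le> ereal c"
  shows "ereal (- 8 * L * \<epsilon> - c) \<le> min_action h (const_seq a) (const_seq b) n \<epsilon>"
  unfolding min_action_def
proof (rule INF_greatest)
  fix z assume zB: "z \<in> Bset (const_seq a) (const_seq b) n \<epsilon>"
  define S where "S = (\<lambda>n w. \<Sum>i<n. h (w i) (w (Suc i)) - hstar h)"
  have "ereal (- 8 * L * \<epsilon> - S n z) \<le> min_action h (const_seq b) (const_seq a) m \<epsilon>"
    unfolding min_action_def
  proof (rule INF_greatest)
    fix w assume wB: "w \<in> Bset (const_seq b) (const_seq a) m \<epsilon>"
    note zc = Bset_const_seq_endpoints[OF ab zB] and wc = Bset_const_seq_endpoints[OF ab(2,1) wB]
    have "L * \<bar>w m - z 0\<bar> \<le> L * (4 * \<epsilon>)" "L * \<bar>w 0 - z n\<bar> \<le> L * (4 * \<epsilon>)"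
      using zc wc lipschitz_unit_square_nonneg[OF L] by (auto intro!: mult_left_mono)
    with sum_orbit_concat_ge[where z = z and w = w and m = m, OF h L zc(3) wc(3) n]
    show "ereal (- 8 * L * \<epsilon> - S n z) \<le> ereal (\<Sum>i<m. h (w i) (w (Suc i)) - hstar h)"
      unfolding S_def by simp
  qed
  then have "ereal (- 8 * L * \<epsilon> - S n z) \<le> ereal c" using c by (rule order_trans)
  then have "- 8 * L * \<epsilon> - S n z \<le> c" by simp
  then show "ereal (- 8 * L * \<epsilon> - c) \<le> ereal (S n z)" by simp
qed

lemma peierls_ge_neg_normalized_action:
  assumes h: "h \<in> classH" and al: "alpha (potential h) = hstar h"
    and ys: "ys \<noteq> []" "set ys \<subseteq> {0..1}" "h (hd ys) (hd ys) = hstar h" "h (last ys) (last ys) = hstar h"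
  shows "ereal (- normalized_action h ys) \<le> peierls (potential h) (const_seq (last ys)) (const_seq (hd ys))"
proof -
  obtain L where L: "lipschitz_unit_square L h" using classH_lipschitz[OF h] .
  have ab: "last ys \<in> {0..1}" "hd ys \<in> {0..1}"
    using ys(2) hd_in_set[OF ys(1)] last_in_set[OF ys(1)] by blast+
  let ?P = "peierls (potential h) (const_seq (last ys)) (const_seq (hd ys))"
  have bound: "ereal (- 8 * L * \<epsilon> - normalized_action h ys) \<le> ?P" if \<epsilon>: "\<epsilon> > 0" for \<epsilon>
  proof -
    obtain m where m: "min_action h (const_seq (hd ys)) (const_seq (last ys)) m \<epsilon> \<le> ereal (normalized_action h ys)"
      using min_action_eventually_le[OF ys \<epsilon>] unfolding eventually_sequentially by blast
    have "ereal (- 8 * L * \<epsilon> - normalized_action h ys)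
        \<le> liminf (\<lambda>n. min_action h (const_seq (last ys)) (const_seq (hd ys)) n \<epsilon>)"
      using min_action_ge_if_reverse_le[OF h L ab _ m]
      by (intro Liminf_bounded) (auto simp: eventually_sequentially)
    also have "\<dots> \<le> ?P"
      unfolding peierls_potential_eq_SUP[OF al] using \<epsilon> by (intro SUP_upper) simp
    finally show ?thesis .
  qed
  show ?thesis
  proof (rule ereal_le_epsilon2)
    fix e :: real assume "0 < e"
    define \<epsilon> where "\<epsilon> = e / (8 * L + 1)"
    have "0 < \<epsilon>" "8 * L * \<epsilon> \<le> e"
      using \<open>0 < e\<close> lipschitz_unit_square_nonneg[OF L] by (simp_all add: \<epsilon>_def field_simps)
    then have "ereal (- normalized_action h ys) \<le> ereal (- 8 * L * \<epsilon> - normalized_action h ys) + ereal e"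
      by simp
    also have "\<dots> \<le> ?P + ereal e"
      using bound[OF \<open>0 < \<epsilon>\<close>] by (rule add_right_mono)
    finally show "ereal (- normalized_action h ys) \<le> ?P + ereal e" .
  qed
qed

section \<open>Chains through an interval of minimizers\<close>

lemma real_induct_Icc:
  fixes a b :: real
  assumes "a \<le> b" "P a"
    and right: "\<And>s. a \<le> s \<Longrightarrow> s < b \<Longrightarrow> P s \<Longrightarrow> \<exists>d>0. \<forall>t. s < t \<and> t < s + d \<and> t \<le> b \<longrightarrow> P t"
    and left: "\<And>s. a < s \<Longrightarrow> s \<le> b \<Longrightarrow> (\<And>t. a \<le> t \<Longrightarrow> t < s \<Longrightarrow> P t) \<Longrightarrow> P s"
  shows "P b"
proof -
  define S where "S = {s. s \<le> b \<and> (\<forall>t. a \<le> t \<and> t \<le> s \<longrightarrow> P t)}"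
  have aS: "a \<in> S" using assms(1,2) by (auto simp: S_def)
  have bdd: "bdd_above S" by (rule bdd_aboveI[of _ b]) (simp add: S_def)
  define s where "s = Sup S"
  have as: "a \<le> s" unfolding s_def by (rule cSup_upper[OF aS bdd])
  have sb: "s \<le> b" unfolding s_def using aS by (intro cSup_least) (auto simp: S_def)
  have below: "P t" if "a \<le> t" "t < s" for t
  proof -
    obtain u where "u \<in> S" "t < u" using \<open>t < s\<close> less_cSup_iff[OF _ bdd] aS unfolding s_def by blast
    with that show ?thesis by (auto simp: S_def)
  qed
  have "P s" using as sb below assms(2) left by (cases "a = s") auto
  with below have upto_s: "P t" if "a \<le> t" "t \<le> s" for t
    using that by (cases "t = s") auto
  show ?thesis
  proof (rule ccontr)
    assume "\<not> P b"
    with \<open>P s\<close> sb have "s < b" by (cases "s = b") auto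
    then obtain d where d: "d > 0" "\<And>t. s < t \<Longrightarrow> t < s + d \<Longrightarrow> t \<le> b \<Longrightarrow> P t"
      using right[OF as _ \<open>P s\<close>] by blast
    define u where "u = min b (s + d / 2)"
    have "u \<in> S" unfolding S_def
    proof (intro CollectI conjI allI impI)
      fix t assume "a \<le> t \<and> t \<le> u"
      then show "P t" using upto_s d \<open>s < b\<close> by (cases "t \<le> s") (auto simp: u_def)
    qed (simp add: u_def)
    then have "u \<le> s" unfolding s_def by (rule cSup_upper[OF _ bdd])
    with d \<open>s < b\<close> show False by (simp add: u_def)
  qed
qed

definition round_trip_action :: "(real \<Rightarrow> real \<Rightarrow> real) \<Rightarrow> real list \<Rightarrow> real" where
  "round_trip_action h xs = normalized_action h xs + normalized_action h (rev xs)"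

lemma round_trip_action_snoc:
  assumes "xs \<noteq> []"
  shows "round_trip_action h (xs @ [y]) =
     round_trip_action h xs + (h (last xs) y + h y (last xs) - 2 * hstar h)"
proof -
  have "normalized_action h (rev (xs @ [y])) = h y (last xs) - hstar h + normalized_action h (rev xs)"
    using normalized_action_Cons[of "rev xs" h y] assms by (simp add: hd_rev)
  then show ?thesis
    by (simp add: round_trip_action_def normalized_action_snoc[OF assms])
qed

lemma round_trip_action_singleton: "round_trip_action h [a] = 0"
  by (simp add: round_trip_action_def normalized_action_def)

lemma round_trip_step_le_lipschitz:
  assumes L: "lipschitz_unit_square L h" and "s \<in> {0..1}" "t \<in> {0..1}" "h s s = hstar h"
  shows "h t s + h s t - 2 * hstar h \<le> 2 * L * \<bar>s - t\<bar>"
  using lipschitz_unit_squareD[OF L, of t s s s] lipschitz_unit_squareD[OF L, of s t s s] assms(2-4)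
  by (auto simp: abs_le_iff abs_minus_commute)

lemma round_trip_step_le_deriv:
  assumes "((\<lambda>\<delta>. (h (s + \<delta>) s - h s s) / \<delta> + (h s (s + \<delta>) - h s s) / \<delta>) \<longlongrightarrow> 0) (at_right 0)"
    and "h s s = hstar h" "\<epsilon> > 0"
  shows "\<exists>d>0. \<forall>t. s < t \<and> t < s + d \<longrightarrow> h s t + h t s - 2 * hstar h \<le> \<epsilon> * (t - s)"
proof -
  have "\<forall>\<^sub>F \<delta> in at_right 0. (h (s + \<delta>) s - h s s) / \<delta> + (h s (s + \<delta>) - h s s) / \<delta> < \<epsilon>"
    using order_tendstoD(2)[OF assms(1) assms(3)] .
  then obtain d where "d > 0" and d: "\<And>\<delta>. 0 < \<delta> \<Longrightarrow> \<delta> < d \<Longrightarrow>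
      (h (s + \<delta>) s - h s s) / \<delta> + (h s (s + \<delta>) - h s s) / \<delta> < \<epsilon>"
    unfolding eventually_at_right_field by auto
  have "h s t + h t s - 2 * hstar h \<le> \<epsilon> * (t - s)" if "s < t" "t < s + d" for t
  proof -
    have "h s t + h t s - 2 * hstar h
        = (t - s) * ((h (s + (t - s)) s - h s s) / (t - s) + (h s (s + (t - s)) - h s s) / (t - s))"
      using that assms(2) by (simp add: distrib_left)
    also have "\<dots> \<le> (t - s) * \<epsilon>"
      using d[of "t - s"] that by (intro mult_left_mono) auto
    finally show ?thesis by (simp add: mult.commute)
  qed
  with \<open>d > 0\<close> show ?thesis by blast
qed

definition chain_in :: "real set \<Rightarrow> real \<Rightarrow> real \<Rightarrow> real list \<Rightarrow> bool" where
  "chain_in I a t xs \<longleftrightarrow> xs \<noteq> [] \<and> hd xs = a \<and> last xs = t \<and> set xs \<subseteq> I"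

lemma chain_in_snoc:
  "chain_in I a t xs \<Longrightarrow> s \<in> I \<Longrightarrow> chain_in I a s (xs @ [s]) \<and>
     round_trip_action h (xs @ [s]) = round_trip_action h xs + (h t s + h s t - 2 * hstar h)"
  by (auto simp: chain_in_def round_trip_action_snoc)

definition cheap_chain_to :: "(real \<Rightarrow> real \<Rightarrow> real) \<Rightarrow> real \<Rightarrow> real \<Rightarrow> real \<Rightarrow> real \<Rightarrow> bool" where
  "cheap_chain_to h a b \<epsilon> t \<longleftrightarrow>
     (\<forall>g>0. \<exists>xs. chain_in {a..b} a t xs \<and> round_trip_action h xs \<le> \<epsilon> * (t - a) + g)"

lemma cheap_chain_to_start: "a \<le> b \<Longrightarrow> cheap_chain_to h a b \<epsilon> a"
  unfolding cheap_chain_to_def chain_in_def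
  by (auto intro!: exI[of _ "[a]"] simp: round_trip_action_singleton)

lemma cheap_chain_to_right:
  assumes deriv: "((\<lambda>\<delta>. (h (s + \<delta>) s - h s s) / \<delta> + (h s (s + \<delta>) - h s s) / \<delta>) \<longlongrightarrow> 0) (at_right 0)"
    and "h s s = hstar h" "\<epsilon> > 0" "cheap_chain_to h a b \<epsilon> s"
  shows "\<exists>d>0. \<forall>t. s < t \<and> t < s + d \<and> t \<le> b \<longrightarrow> cheap_chain_to h a b \<epsilon> t"
proof -
  obtain d where "d > 0" and d: "\<And>t. s < t \<Longrightarrow> t < s + d \<Longrightarrow> h s t + h t s - 2 * hstar h \<le> \<epsilon> * (t - s)"
    using round_trip_step_le_deriv[OF deriv assms(2,3)] by auto
  have "cheap_chain_to h a b \<epsilon> t" if t: "s < t" "t < s + d" "t \<le> b" for t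
    unfolding cheap_chain_to_def
  proof (intro allI impI)
    fix g :: real assume "g > 0"
    then obtain xs where xs: "chain_in {a..b} a s xs" "round_trip_action h xs \<le> \<epsilon> * (s - a) + g"
      using assms(4) unfolding cheap_chain_to_def by blast
    then have "s \<in> {a..b}" unfolding chain_in_def by (metis last_in_set subsetD)
    then have "t \<in> {a..b}" using t by auto
    note snoc = chain_in_snoc[OF xs(1) this, of h]
    with xs(2) d[OF t(1,2)] have "round_trip_action h (xs @ [t]) \<le> \<epsilon> * (t - a) + g"
      by (simp add: algebra_simps)
    with snoc show "\<exists>xs. chain_in {a..b} a t xs \<and> round_trip_action h xs \<le> \<epsilon> * (t - a) + g"
      by blast
  qed
  with \<open>d > 0\<close> show ?thesis by blast
qed

lemma cheap_chain_to_left: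
  assumes L: "lipschitz_unit_square L h" and ab: "{a..b} \<subseteq> mset_h h" and s: "a < s" "s \<le> b"
    and "\<epsilon> > 0" and below: "\<And>t. a \<le> t \<Longrightarrow> t < s \<Longrightarrow> cheap_chain_to h a b \<epsilon> t"
  shows "cheap_chain_to h a b \<epsilon> s"
  unfolding cheap_chain_to_def
proof (intro allI impI)
  fix g :: real assume "g > 0"
  have L0: "0 \<le> L" by (rule lipschitz_unit_square_nonneg[OF L])
  define t where "t = max a (s - g / (4 * L + 1))"
  have t: "a \<le> t" "t < s" "s - t \<le> g / (4 * L + 1)"
    using s \<open>g > 0\<close> L0 by (auto simp: t_def)
  have "2 * L * \<bar>s - t\<bar> \<le> 2 * L * (g / (4 * L + 1))"
    using t L0 by (intro mult_left_mono) auto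
  also have "\<dots> \<le> g / 2" using \<open>g > 0\<close> L0 by (simp add: field_simps)
  finally have step: "2 * L * \<bar>s - t\<bar> \<le> g / 2" .
  obtain xs where xs: "chain_in {a..b} a t xs" "round_trip_action h xs \<le> \<epsilon> * (t - a) + g / 2"
    using below[OF t(1,2)] \<open>g > 0\<close> unfolding cheap_chain_to_def by (meson half_gt_zero)
  have st: "s \<in> mset_h h" "t \<in> mset_h h" using ab s t by auto
  note snoc = chain_in_snoc[OF xs(1), of s h]
  have "h t s + h s t - 2 * hstar h \<le> g / 2"
    using round_trip_step_le_lipschitz[OF L, of s t] st step by (simp add: mset_h_def)
  moreover have "\<epsilon> * (t - a) \<le> \<epsilon> * (s - a)" using t \<open>\<epsilon> > 0\<close> by (intro mult_left_mono) auto
  ultimately have "round_trip_action h (xs @ [s]) \<le> \<epsilon> * (s - a) + g"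
    using snoc s xs(2) by auto
  with snoc s show "\<exists>xs. chain_in {a..b} a s xs \<and> round_trip_action h xs \<le> \<epsilon> * (s - a) + g"
    by auto
qed

text \<open>Real induction along [a, b]: the derivative condition lets a chain advance from s to any
  nearby t > s at round-trip cost \<epsilon> (t - s), and Lipschitz continuity lets a chain ending
  just below s be closed up to s at small cost.\<close>
lemma round_trip_chain_small:
  assumes L: "lipschitz_unit_square L h" and ab: "a \<le> b" "{a..b} \<subseteq> mset_h h"
    and deriv: "\<forall>z\<in>{a..b}. ((\<lambda>\<delta>. (h (z + \<delta>) z - h z z) / \<delta> + (h z (z + \<delta>) - h z z) / \<delta>) \<longlongrightarrow> 0) (at_right 0)"
    and \<eta>: "\<eta> > 0"
  shows "\<exists>xs. chain_in {a..b} a b xs \<and> round_trip_action h xs \<le> \<eta>"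
proof -
  define \<epsilon> where "\<epsilon> = \<eta> / (2 * (b - a + 1))"
  have \<epsilon>: "\<epsilon> > 0" "\<epsilon> * (b - a) \<le> \<eta> / 2"
    using \<eta> ab(1) by (auto simp: \<epsilon>_def field_simps)
  have "cheap_chain_to h a b \<epsilon> b"
  proof (rule real_induct_Icc[where P = "cheap_chain_to h a b \<epsilon>", OF ab(1) cheap_chain_to_start[OF ab(1)]])
    fix s assume s: "a \<le> s" "s < b" "cheap_chain_to h a b \<epsilon> s"
    then have "s \<in> {a..b}" by simp
    with deriv ab(2) have "((\<lambda>\<delta>. (h (s + \<delta>) s - h s s) / \<delta> + (h s (s + \<delta>) - h s s) / \<delta>) \<longlongrightarrow> 0) (at_right 0)"
      and "h s s = hstar h"
      unfolding mset_h_def by blast+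
    from cheap_chain_to_right[OF this \<epsilon>(1) s(3)]
    show "\<exists>d>0. \<forall>t. s < t \<and> t < s + d \<and> t \<le> b \<longrightarrow> cheap_chain_to h a b \<epsilon> t" .
  qed (rule cheap_chain_to_left[OF L ab(2) _ _ \<epsilon>(1)])
  then obtain xs where "chain_in {a..b} a b xs" "round_trip_action h xs \<le> \<epsilon> * (b - a) + \<eta> / 2"
    using \<eta> unfolding cheap_chain_to_def by (meson half_gt_zero)
  with \<epsilon>(2) show ?thesis by (intro exI[of _ xs]) auto
qed

lemma ereal_add_eq_0_if_bracketed:
  fixes P Q :: ereal
  assumes "\<And>\<eta>. \<eta> > 0 \<Longrightarrow> \<exists>c d. c + d \<le> \<eta> \<and> P \<le> ereal c \<and> Q \<le> ereal d \<and> ereal (- d) \<le> P \<and> ereal (- c) \<le> Q"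
  shows "P + Q = 0"
proof -
  obtain c d where "P \<le> ereal c" "Q \<le> ereal d" "ereal (- d) \<le> P" "ereal (- c) \<le> Q"
    using assms[of 1] by auto
  then obtain p q where pq: "P = ereal p" "Q = ereal q" by (cases P; cases Q) auto
  have "\<bar>p + q\<bar> \<le> 0 + \<eta>" if "\<eta> > 0" for \<eta>
    using assms[OF that] pq by auto
  then have "\<bar>p + q\<bar> \<le> 0" by (rule field_le_epsilon)
  then have "p + q = 0" by simp
  then show ?thesis using pq by simp
qed

lemma peierls_sum_eq_0_if_Icc:
  assumes h: "h \<in> classH" and ab: "a \<le> b" "{a..b} \<subseteq> mset_h h"
    and deriv: "\<forall>z\<in>{a..b}. ((\<lambda>\<delta>. (h (z + \<delta>) z - h z z) / \<delta> + (h z (z + \<delta>) - h z z) / \<delta>) \<longlongrightarrow> 0) (at_right 0)"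
  shows "peierls (potential h) (const_seq a) (const_seq b) + peierls (potential h) (const_seq b) (const_seq a) = 0"
proof (rule ereal_add_eq_0_if_bracketed)
  fix \<eta> :: real assume "\<eta> > 0"
  obtain L where L: "lipschitz_unit_square L h" using classH_lipschitz[OF h] .
  obtain xs where xs: "chain_in {a..b} a b xs" "round_trip_action h xs \<le> \<eta>"
    using round_trip_chain_small[OF L ab deriv \<open>\<eta> > 0\<close>] by blast
  have al: "alpha (potential h) = hstar h"
    using alpha_potential_eq_hstar[OF h] ab by auto
  have chain: "xs \<noteq> []" "set xs \<subseteq> {0..1}" "h (hd xs) (hd xs) = hstar h" "h (last xs) (last xs) = hstar h"
    and ends: "hd xs = a" "last xs = b"
    using xs(1) ab unfolding chain_in_def mset_h_def by auto
  have rchain: "rev xs \<noteq> []" "set (rev xs) \<subseteq> {0..1}"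
    "h (hd (rev xs)) (hd (rev xs)) = hstar h" "h (last (rev xs)) (last (rev xs)) = hstar h"
    using chain by (simp_all add: hd_rev last_rev)
  show "\<exists>c d. c + d \<le> \<eta> \<and>
      peierls (potential h) (const_seq a) (const_seq b) \<le> ereal c \<and>
      peierls (potential h) (const_seq b) (const_seq a) \<le> ereal d \<and>
      ereal (- d) \<le> peierls (potential h) (const_seq a) (const_seq b) \<and>
      ereal (- c) \<le> peierls (potential h) (const_seq b) (const_seq a)"
    using peierls_le_normalized_action[OF al chain] peierls_le_normalized_action[OF al rchain]
      peierls_ge_neg_normalized_action[OF h al chain] peierls_ge_neg_normalized_action[OF h al rchain]
      xs(2) ends
    by (intro exI[of _ "normalized_action h xs"] exI[of _ "normalized_action h (rev xs)"])
       (simp add: round_trip_action_def hd_rev last_rev)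
qed

theorem theorem4p5:
  fixes h :: "real \<Rightarrow> real \<Rightarrow> real" and a b :: real
  assumes "h \<in> classH"
    and "a \<in> mset_h h" and "b \<in> mset_h h"
    and "b \<in> connected_component_set (mset_h h) a"
    and "\<forall>z \<in> connected_component_set (mset_h h) a.
           ((\<lambda>\<delta>. (h (z + \<delta>) z - h z z) / \<delta> + (h z (z + \<delta>) - h z z) / \<delta>) \<longlongrightarrow> 0)
             (at_right 0)"
  shows "peierls (\<lambda>x. h (x 0) (x 1)) (const_seq a) (const_seq b)
       + peierls (\<lambda>x. h (x 0) (x 1)) (const_seq b) (const_seq a) = 0"
proof -
  let ?C = "connected_component_set (mset_h h) a"
  have "a \<in> ?C" using assms(2) by simp
  have Icc: "{min a b..max a b} \<subseteq> ?C"
    using connected_contains_Icc[OF connected_connected_component \<open>a \<in> ?C\<close> assms(4)]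
      connected_contains_Icc[OF connected_connected_component assms(4) \<open>a \<in> ?C\<close>]
    by (cases "a \<le> b") (simp_all add: min_def max_def)
  then have "{min a b..max a b} \<subseteq> mset_h h" using connected_component_subset by blast
  with Icc assms(5) have "peierls (potential h) (const_seq (min a b)) (const_seq (max a b))
      + peierls (potential h) (const_seq (max a b)) (const_seq (min a b)) = 0"
    by (intro peierls_sum_eq_0_if_Icc[OF assms(1)]) auto
  then show ?thesis by (cases "a \<le> b") (simp_all add: min_def max_def add.commute)
qed

end
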